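(* Let $q:\chi\to[0,\infty)$ be a risk metric. A risk-sharing rule $\boldsymbol{C}$ on $\chi^n$ is the $q$-proportional RS rule if and only if it satisfies the reshuffling property and has source-anonymous contribution-over-$q$ ratios.
   Context: Fix a probability space $(\Omega,\mathcal{F},\mathbb{P})$ and an integer $n\ge 1$. Let $\chi$ be a convex cone of non-negative random variables on this space (closed under addition and under multiplication by positive scalars) with $0\in\chi$. All equalities between random variables are understood almost surely. A pool is a vector $\boldsymbol{X}=(X_1,\ldots,X_n)\in\chi^n$, with aggregate loss $S_{\boldsymbol{X}}=\sum_{i=1}^n X_i$. A risk-sharing (RS) rule is a mapping $\boldsymbol{C}$ assigning to every pool $\boldsymbol{X}\in\chi^n$ a vector $\boldsymbol{C}[\boldsymbol{X}]=(C_1[\boldsymbol{X}],\ldots,C_n[\boldsymbol{X}])$ of real-valued random variables satisfying $\sum_{i=1}^n C_i[\boldsymbol{X}]=S_{\boldsymbol{X}}$. A risk metric is any function $q:\chi\to[0,\infty)$. The $q$-proportional RS rule is specified only on pools with $q[X_j]>0$ for at least one $j$, where it is given by $C_i[\boldsymbol{X}]=\frac{q[X_i]}{\sum_{k=1}^n q[X_k]}S_{\boldsymbol{X}}$ for $i=1,\ldots,n$; a rule "is the $q$-proportional RS rule" if its contributions equal these on every such pool (its values on pools with all $q[X_j]=0$ are left unspecified). For a permutation $\pi$ of $\{1,\ldots,n\}$, $\boldsymbol{X}^\pi=(X_{\pi(1)},\ldots,X_{\pi(n)})$. Reshuffling property: $C_i[\boldsymbol{X}^\pi]=C_{\pi(i)}[\boldsymbol{X}]$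 for all pools $\boldsymbol{X}$, permutations $\pi$ and indices $i$. Source-anonymous contribution-over-$q$ ratios: for every pool $\boldsymbol{X}$, every permutation $\pi$ and every $i$ with $q[X_i]>0$, $C_i[\boldsymbol{X}^\pi]=\frac{q[X_{\pi(i)}]}{q[X_i]}C_i[\boldsymbol{X}]$. *)

theory Defs
  imports "HOL-Probability.Probability" "HOL-Combinatorics.Permutations"
begin

text \<open>Random variables are real-valued functions on the sample space of the
probability space M; equalities between random variables are almost sure.
A pool is a vector indexed by a finite type 'n (so n = CARD('n) \<ge> 1).\<close>

definition convex_cone_rv :: "'w measure \<Rightarrow> ('w \<Rightarrow> real) set \<Rightarrow> bool" where
  "convex_cone_rv M K \<longleftrightarrow>
     (\<lambda>_. 0) \<in> K \<and>
     (\<forall>X\<in>K. X \<in> borel_measurable M \<and> (AE \<omega> in M. 0 \<le> X \<omega>)) \<and>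
     (\<forall>X\<in>K. \<forall>Y\<in>K. (\<lambda>\<omega>. X \<omega> + Y \<omega>) \<in> K) \<and>
     (\<forall>X\<in>K. \<forall>c::real. c > 0 \<longrightarrow> (\<lambda>\<omega>. c * X \<omega>) \<in> K)"

definition pools :: "('w \<Rightarrow> real) set \<Rightarrow> ('n::finite \<Rightarrow> 'w \<Rightarrow> real) set" where
  "pools K = {X. \<forall>i. X i \<in> K}"

definition aggregate :: "('n::finite \<Rightarrow> 'w \<Rightarrow> real) \<Rightarrow> 'w \<Rightarrow> real" where
  "aggregate X = (\<lambda>\<omega>. \<Sum>i\<in>UNIV. X i \<omega>)"

definition risk_metric :: "('w \<Rightarrow> real) set \<Rightarrow> (('w \<Rightarrow> real) \<Rightarrow> real) \<Rightarrow> bool" where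
  "risk_metric K q \<longleftrightarrow> (\<forall>X\<in>K. 0 \<le> q X)"

definition RS_rule :: "'w measure \<Rightarrow> ('w \<Rightarrow> real) set
    \<Rightarrow> (('n::finite \<Rightarrow> 'w \<Rightarrow> real) \<Rightarrow> 'n \<Rightarrow> 'w \<Rightarrow> real) \<Rightarrow> bool" where
  "RS_rule M K C \<longleftrightarrow> (\<forall>X\<in>pools K.
      (\<forall>i. C X i \<in> borel_measurable M) \<and>
      (AE \<omega> in M. (\<Sum>i\<in>UNIV. C X i \<omega>) = aggregate X \<omega>))"

definition q_proportional :: "'w measure \<Rightarrow> ('w \<Rightarrow> real) set \<Rightarrow> (('w \<Rightarrow> real) \<Rightarrow> real)
    \<Rightarrow> (('n::finite \<Rightarrow> 'w \<Rightarrow> real) \<Rightarrow> 'n \<Rightarrow> 'w \<Rightarrow> real) \<Rightarrow> bool" where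
  "q_proportional M K q C \<longleftrightarrow> (\<forall>X\<in>pools K. (\<exists>j. q (X j) > 0) \<longrightarrow>
      (\<forall>i. AE \<omega> in M. C X i \<omega> = q (X i) / (\<Sum>k\<in>UNIV. q (X k)) * aggregate X \<omega>))"

definition reshuffling_on :: "'w measure \<Rightarrow> ('n::finite \<Rightarrow> 'w \<Rightarrow> real) set
    \<Rightarrow> (('n \<Rightarrow> 'w \<Rightarrow> real) \<Rightarrow> 'n \<Rightarrow> 'w \<Rightarrow> real) \<Rightarrow> bool" where
  "reshuffling_on M P C \<longleftrightarrow> (\<forall>X\<in>P. \<forall>\<pi>. \<pi> permutes UNIV \<longrightarrow>
      (\<forall>i. AE \<omega> in M. C (\<lambda>j. X (\<pi> j)) i \<omega> = C X (\<pi> i) \<omega>))"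

definition source_anonymous :: "'w measure \<Rightarrow> ('w \<Rightarrow> real) set \<Rightarrow> (('w \<Rightarrow> real) \<Rightarrow> real)
    \<Rightarrow> (('n::finite \<Rightarrow> 'w \<Rightarrow> real) \<Rightarrow> 'n \<Rightarrow> 'w \<Rightarrow> real) \<Rightarrow> bool" where
  "source_anonymous M K q C \<longleftrightarrow> (\<forall>X\<in>pools K. \<forall>\<pi>. \<pi> permutes UNIV \<longrightarrow>
      (\<forall>i. q (X i) > 0 \<longrightarrow>
        (AE \<omega> in M. C (\<lambda>j. X (\<pi> j)) i \<omega> = q (X (\<pi> i)) / q (X i) * C X i \<omega>)))"

end

theory Submission
  imports Defs
begin

text \<open>Under the q-proportional rule, permuting a pool permutes the weights q[X_i] and leaves
both their total and the aggregate loss unchanged, so contributions simply travel with the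
risks; this gives reshuffling and the contribution-over-q ratios at once. Conversely,
applying both properties to the transposition of i and j (with q[X_j] > 0) yields
C_i = q[X_i] / q[X_j] * C_j; summing over i and using that the contributions add up to the
aggregate loss identifies C_j, and hence every C_i, as the proportional share.\<close>

lemma sum_permutes_UNIV:
  fixes g :: "'n::finite \<Rightarrow> 'a::comm_monoid_add"
  assumes "\<pi> permutes UNIV"
  shows "(\<Sum>k\<in>UNIV. g (\<pi> k)) = (\<Sum>k\<in>UNIV. g k)"
  using sum.permute[OF assms, of g] by (simp add: comp_def)

lemma aggregate_permute:
  fixes X :: "'n::finite \<Rightarrow> 'w \<Rightarrow> real"
  assumes "\<pi> permutes UNIV"
  shows "aggregate (\<lambda>j. X (\<pi> j)) = aggregate X"
  unfolding aggregate_def by (rule ext) (rule sum_permutes_UNIV[OF assms])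

lemma pools_permute: "X \<in> pools K \<Longrightarrow> (\<lambda>j. X (\<pi> j)) \<in> pools K"
  by (simp add: pools_def)

lemma risk_metric_sum_pos:
  assumes "risk_metric K q" and "X \<in> pools K" and "q (X j) > 0"
  shows "(\<Sum>k\<in>UNIV. q (X k)) > 0"
proof -
  have "q (X j) \<le> (\<Sum>k\<in>UNIV. q (X k))"
    by (rule member_le_sum) (use assms in \<open>auto simp: pools_def risk_metric_def\<close>)
  with assms(3) show ?thesis by linarith
qed

lemma proportional_share:
  fixes c w :: "'n::finite \<Rightarrow> real"
  assumes ratio: "\<And>k. c k = w k / w j * c j" and "w j \<noteq> 0"
    and "(\<Sum>k\<in>UNIV. w k) \<noteq> 0"
  shows "c i = w i / (\<Sum>k\<in>UNIV. w k) * (\<Sum>k\<in>UNIV. c k)"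
proof -
  have "(\<Sum>k\<in>UNIV. c k) = (\<Sum>k\<in>UNIV. w k) / w j * c j"
    by (subst ratio) (simp add: sum_distrib_right sum_divide_distrib)
  then have "c j = w j / (\<Sum>k\<in>UNIV. w k) * (\<Sum>k\<in>UNIV. c k)"
    using assms(2,3) by (simp add: field_simps)
  with ratio[of i] assms(2) show ?thesis
    by (simp add: field_simps)
qed

lemma q_proportional_permute:
  assumes "q_proportional M K q C" and "X \<in> pools K" and "q (X j) > 0"
    and \<pi>: "\<pi> permutes UNIV"
  shows "AE \<omega> in M. C (\<lambda>l. X (\<pi> l)) i \<omega>
           = q (X (\<pi> i)) / (\<Sum>k\<in>UNIV. q (X k)) * aggregate X \<omega>"
proof -
  have "q (X (\<pi> (inv \<pi> j))) > 0"
    using assms(3) \<pi> by (simp add: permutes_inverses)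
  then have "AE \<omega> in M. C (\<lambda>l. X (\<pi> l)) i \<omega> = q (X (\<pi> i)) / (\<Sum>k\<in>UNIV. q (X (\<pi> k)))
               * aggregate (\<lambda>l. X (\<pi> l)) \<omega>"
    using assms(1)[unfolded q_proportional_def, rule_format, OF pools_permute[OF assms(2)]]
    by blast
  then show ?thesis
    by (simp add: aggregate_permute[OF \<pi>] sum_permutes_UNIV[OF \<pi>, of "\<lambda>k. q (X k)"])
qed

lemma q_proportional_imp_reshuffling:
  fixes C :: "('n::finite \<Rightarrow> 'w \<Rightarrow> real) \<Rightarrow> 'n \<Rightarrow> 'w \<Rightarrow> real"
  assumes "q_proportional M K q C"
  shows "reshuffling_on M {X \<in> pools K. \<exists>j. q (X j) > 0} C"
  unfolding reshuffling_on_def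
proof (intro ballI allI impI)
  fix X :: "'n \<Rightarrow> 'w \<Rightarrow> real" and \<pi> :: "'n \<Rightarrow> 'n" and i
  assume "X \<in> {X \<in> pools K. \<exists>j. q (X j) > 0}" and \<pi>: "\<pi> permutes UNIV"
  then obtain j where X: "X \<in> pools K" and j: "q (X j) > 0" by auto
  have "AE \<omega> in M. C X (\<pi> i) \<omega> = q (X (\<pi> i)) / (\<Sum>k\<in>UNIV. q (X k)) * aggregate X \<omega>"
    using assms X j unfolding q_proportional_def by blast
  with q_proportional_permute[where q = q and X = X, OF assms X j \<pi>]
  show "AE \<omega> in M. C (\<lambda>l. X (\<pi> l)) i \<omega> = C X (\<pi> i) \<omega>"
    by eventually_elim simp
qed

lemma q_proportional_imp_source_anonymous:
  fixes C :: "('n::finite \<Rightarrow> 'w \<Rightarrow> real) \<Rightarrow> 'n \<Rightarrow> 'w \<Rightarrow> real"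
  assumes "q_proportional M K q C"
  shows "source_anonymous M K q C"
  unfolding source_anonymous_def
proof (intro ballI allI impI)
  fix X :: "'n \<Rightarrow> 'w \<Rightarrow> real" and \<pi> :: "'n \<Rightarrow> 'n" and i
  assume X: "X \<in> pools K" and \<pi>: "\<pi> permutes UNIV" and i: "q (X i) > 0"
  have "AE \<omega> in M. C X i \<omega> = q (X i) / (\<Sum>k\<in>UNIV. q (X k)) * aggregate X \<omega>"
    using assms X i unfolding q_proportional_def by blast
  with q_proportional_permute[where q = q and X = X, OF assms X i \<pi>]
  show "AE \<omega> in M. C (\<lambda>l. X (\<pi> l)) i \<omega> = q (X (\<pi> i)) / q (X i) * C X i \<omega>"
    by eventually_elim (use i in simp)
qed

lemma reshuffling_source_anonymous_ratio:
  assumes "source_anonymous M K q C"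
    and "reshuffling_on M {X \<in> pools K. \<exists>j. q (X j) > 0} C"
    and "X \<in> pools K" and "q (X j) > 0"
  shows "AE \<omega> in M. C X k \<omega> = q (X k) / q (X j) * C X j \<omega>"
proof -
  define \<pi> where "\<pi> = Transposition.transpose k j"
  have \<pi>: "\<pi> permutes UNIV"
    unfolding \<pi>_def by (rule permutes_swap_id) auto
  have "AE \<omega> in M. C (\<lambda>l. X (\<pi> l)) j \<omega> = C X (\<pi> j) \<omega>"
    using assms(2,3,4) \<pi> unfolding reshuffling_on_def by blast
  moreover have "AE \<omega> in M. C (\<lambda>l. X (\<pi> l)) j \<omega> = q (X (\<pi> j)) / q (X j) * C X j \<omega>"
    using assms(1,3,4) \<pi> unfolding source_anonymous_def by blast
  ultimately show ?thesis
    by eventually_elim (simp add: \<pi>_def)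
qed

lemma reshuffling_source_anonymous_imp_q_proportional:
  fixes C :: "('n::finite \<Rightarrow> 'w \<Rightarrow> real) \<Rightarrow> 'n \<Rightarrow> 'w \<Rightarrow> real"
  assumes "risk_metric K q" and "RS_rule M K C"
    and "reshuffling_on M {X \<in> pools K. \<exists>j. q (X j) > 0} C"
    and "source_anonymous M K q C"
  shows "q_proportional M K q C"
  unfolding q_proportional_def
proof (intro ballI impI allI)
  fix X :: "'n \<Rightarrow> 'w \<Rightarrow> real" and i
  assume X: "X \<in> pools K" and "\<exists>j. q (X j) > 0"
  then obtain j where j: "q (X j) > 0" by auto
  have "AE \<omega> in M. C X k \<omega> = q (X k) / q (X j) * C X j \<omega>" for k
    using assms(4,3) X j by (rule reshuffling_source_anonymous_ratio[where q = q and X = X])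
  then have "AE \<omega> in M. \<forall>k\<in>UNIV. C X k \<omega> = q (X k) / q (X j) * C X j \<omega>"
    by (intro AE_finite_allI) simp_all
  moreover have "AE \<omega> in M. (\<Sum>k\<in>UNIV. C X k \<omega>) = aggregate X \<omega>"
    using assms(2) X unfolding RS_rule_def by blast
  ultimately show "AE \<omega> in M. C X i \<omega> = q (X i) / (\<Sum>k\<in>UNIV. q (X k)) * aggregate X \<omega>"
  proof eventually_elim
    case (elim \<omega>)
    then have ratio: "C X k \<omega> = q (X k) / q (X j) * C X j \<omega>" for k
      by blast
    have "C X i \<omega> = q (X i) / (\<Sum>k\<in>UNIV. q (X k)) * (\<Sum>k\<in>UNIV. C X k \<omega>)"
      by (rule proportional_share[of "\<lambda>k. C X k \<omega>" "\<lambda>k. q (X k)" j, OF ratio])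
        (use j risk_metric_sum_pos[where q = q and X = X, OF assms(1) X j] in auto)
    with elim(2) show ?case by simp
  qed
qed

theorem theorem3:
  fixes M :: "'w measure" and K :: "('w \<Rightarrow> real) set"
    and q :: "('w \<Rightarrow> real) \<Rightarrow> real"
    and C :: "('n::finite \<Rightarrow> 'w \<Rightarrow> real) \<Rightarrow> 'n \<Rightarrow> 'w \<Rightarrow> real"
  assumes "prob_space M"
    and "convex_cone_rv M K"
    and "risk_metric K q"
    and "RS_rule M K C"
  shows "q_proportional M K q C \<longleftrightarrow>
           (reshuffling_on M {X \<in> pools K. \<exists>j. q (X j) > 0} C \<and> source_anonymous M K q C)"
  using q_proportional_imp_reshuffling q_proportional_imp_source_anonymous
    reshuffling_source_anonymous_imp_q_proportional[OF assms(3,4)]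
  by blast

end
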